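(* Let $q\in\mathbb{C}\setminus\{0\}$, $n\in\mathbb{Z}_{>0}$, and let $\alpha,\beta,f\in\mathbb{C}[x^{-1}][[x]]$ with $\alpha,\beta$ nonzero. Suppose $\alpha\,\sigma_qf+f=\beta$ and that $\beta_j\neq0$ for every integer $0<j\le n$, where $\beta_j=\sum_{k=0}^{j-1}(-\alpha\sigma_q)^k\beta$. Then $$L_n^{\alpha,\beta}(f^n)=(-1)^{n(n-1)/2},$$ where $$L_n^{\alpha,\beta}=\frac{1}{\beta_n}\left(\alpha\sigma_q+1\right)\frac{1}{\beta_{n-1}}\left(\alpha^2\sigma_q-1\right)\cdots\frac{1}{\beta_1}\left(\alpha^n\sigma_q-(-1)^n\right),$$ i.e. the composition, from left to right over $i=1,\dots,n$, of the factors $\frac{1}{\beta_{n+1-i}}\left(\alpha^{i}\sigma_q-(-1)^{i}\right)$.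
   Context: $\mathbb{C}[x^{-1}][[x]]$ is the field of formal Laurent series; $\sigma_qf(x)=f(qx)$; field elements act as multiplication operators and products of operators denote composition. *)

theory Defs
  imports "HOL-Computational_Algebra.Formal_Laurent_Series"
begin

text \<open>The q-dilation operator: (sigma_q f)(x) = f(q x), i.e. the k-th coefficient is multiplied by q^k.\<close>
definition sigma_q :: "complex \<Rightarrow> complex fls \<Rightarrow> complex fls" where
  "sigma_q q f = Abs_fls (\<lambda>k. q powi k * fls_nth f k)"

definition beta_seq :: "complex \<Rightarrow> complex fls \<Rightarrow> complex fls \<Rightarrow> nat \<Rightarrow> complex fls" where
  "beta_seq q \<alpha> \<beta> j = (\<Sum>k<j. ((\<lambda>h. - (\<alpha> * sigma_q q h)) ^^ k) \<beta>)"

definition L_factor :: "complex \<Rightarrow> complex fls \<Rightarrow> complex fls \<Rightarrow> nat \<Rightarrow> nat \<Rightarrow> complex fls \<Rightarrow> complex fls" where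
  "L_factor q \<alpha> \<beta> n i g =
     (\<alpha> ^ i * sigma_q q g - (-1) ^ i * g) / beta_seq q \<alpha> \<beta> (n + 1 - i)"

definition L_op :: "complex \<Rightarrow> complex fls \<Rightarrow> complex fls \<Rightarrow> nat \<Rightarrow> complex fls \<Rightarrow> complex fls" where
  "L_op q \<alpha> \<beta> n g = foldr (\<lambda>i h. L_factor q \<alpha> \<beta> n i h) [1..<n+1] g"

end

theory Submission
  imports Defs
begin

unbundle fps_syntax

text \<open>
  Put N h = -\<alpha> \<sigma>_q h and v_j = N^j f. The equation for f says \<beta> = f - N f, so
  \<beta>_j = v_0 - v_j by telescoping. Write h_m(v_0, ..., v_d) for the complete homogeneous symmetric
  polynomial. Since \<sigma>_q is a ring endomorphism, \<alpha>^m \<sigma>_q h_m(v_0, ..., v_d) = (-1)^m h_m(v_1, ..., v_{d+1}),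
  and the identity h_m(v_1, ..., v_{d+1}) - h_m(v_0, ..., v_d) = (v_{d+1} - v_0) h_{m-1}(v_0, ..., v_{d+1})
  shows that the i-th factor of L_n sends h_i(v_0, ..., v_{n-i}) to (-1)^{i-1} h_{i-1}(v_0, ..., v_{n-i+1}).
  Starting from f^n = h_n(v_0), the factors i = n, ..., 1 end at h_0 = 1 with sign (-1)^{0 + 1 + ... + (n-1)}.
\<close>

text \<open>\<open>complete_homogeneous v m d\<close> is \<open>h\<^sub>m(v 0, \<dots>, v d)\<close>.\<close>
fun complete_homogeneous :: "(nat \<Rightarrow> 'a::comm_ring_1) \<Rightarrow> nat \<Rightarrow> nat \<Rightarrow> 'a" where
  "complete_homogeneous v 0 d = 1"
| "complete_homogeneous v (Suc m) 0 = v 0 ^ Suc m"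
| "complete_homogeneous v (Suc m) (Suc d) =
     complete_homogeneous v (Suc m) d + v (Suc d) * complete_homogeneous v m (Suc d)"

lemma complete_homogeneous_shift_diff_0:
  "complete_homogeneous (\<lambda>k. v (Suc k)) (Suc m) 0 - complete_homogeneous v (Suc m) 0
     = (v 1 - v 0) * complete_homogeneous v m 1"
proof (induction m)
  case (Suc m)
  have "v 1 ^ Suc (Suc m) - v 0 ^ Suc (Suc m)
      = v 1 * (v 1 ^ Suc m - v 0 ^ Suc m) + (v 1 - v 0) * v 0 ^ Suc m"
    by (simp add: algebra_simps)
  also have "\<dots> = (v 1 - v 0) * (v 0 ^ Suc m + v 1 * complete_homogeneous v m 1)"
  proof -
    have "v 1 ^ Suc m - v 0 ^ Suc m = (v 1 - v 0) * complete_homogeneous v m 1"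
      using Suc.IH by simp
    then show ?thesis by (simp only: ring_distribs(2)[symmetric]) (simp add: algebra_simps)
  qed
  finally show ?case by simp
qed simp

lemma complete_homogeneous_shift_diff:
  "complete_homogeneous (\<lambda>k. v (Suc k)) (Suc m) d - complete_homogeneous v (Suc m) d
     = (v (Suc d) - v 0) * complete_homogeneous v m (Suc d)"
proof (induction d arbitrary: m)
  case 0
  show ?case using complete_homogeneous_shift_diff_0 by simp
next
  case (Suc d)
  note outer_IH = Suc.IH
  let ?h = "complete_homogeneous v" and ?h' = "complete_homogeneous (\<lambda>k. v (Suc k))"
  show ?case
  proof (induction m)
    case 0
    show ?case using outer_IH[of 0] by (simp add: algebra_simps)
  next
    case (Suc m)
    have shifted: "?h' (Suc m) (Suc d) = ?h (Suc m) (Suc d) + (v (Suc (Suc d)) - v 0) * ?h m (Suc (Suc d))"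
      using Suc.IH by (simp add: algebra_simps)
    have "?h' (Suc (Suc m)) (Suc d) - ?h (Suc (Suc m)) (Suc d)
        = (?h' (Suc (Suc m)) d - ?h (Suc (Suc m)) d)
          + v (Suc (Suc d)) * ?h' (Suc m) (Suc d) - v (Suc d) * ?h (Suc m) (Suc d)"
      by simp
    also have "\<dots> = (v (Suc (Suc d)) - v 0) * (?h (Suc m) (Suc d) + v (Suc (Suc d)) * ?h m (Suc (Suc d)))"
      unfolding outer_IH shifted
      by (simp add: algebra_simps)
    finally show ?case by simp
  qed
qed

lemma complete_homogeneous_endomorphism:
  fixes \<phi> :: "'a::comm_ring_1 \<Rightarrow> 'a"
  assumes add: "\<And>x y. \<phi> (x + y) = \<phi> x + \<phi> y"
    and mult: "\<And>x y. \<phi> (x * y) = \<phi> x * \<phi> y"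
    and one: "\<phi> 1 = 1"
    and shift: "\<And>j. v (Suc j) = - (a * \<phi> (v j))"
  shows "a ^ m * \<phi> (complete_homogeneous v m d) = (-1) ^ m * complete_homogeneous (\<lambda>k. v (Suc k)) m d"
proof -
  have power: "\<phi> (x ^ k) = \<phi> x ^ k" for x k
    by (induction k) (simp_all add: one mult)
  show ?thesis
    using shift
  proof (induction v m d rule: complete_homogeneous.induct)
    case (1 v d)
    show ?case by (simp add: one)
  next
    case (2 v m)
    have "a ^ Suc m * \<phi> (v 0 ^ Suc m) = (a * \<phi> (v 0)) ^ Suc m"
      by (simp only: power power_mult_distrib)
    also have "\<dots> = (-1) ^ Suc m * v 1 ^ Suc m"
    proof -
      have "a * \<phi> (v 0) = (-1) * v 1" using "2.prems"[of 0] by simp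
      then show ?thesis by (simp only: power_mult_distrib)
    qed
    finally show ?case by simp
  next
    case (3 v m d)
    have "a ^ Suc m * \<phi> (complete_homogeneous v (Suc m) (Suc d))
       = a ^ Suc m * \<phi> (complete_homogeneous v (Suc m) d)
         + (a * \<phi> (v (Suc d))) * (a ^ m * \<phi> (complete_homogeneous v m (Suc d)))"
      by (simp only: complete_homogeneous.simps add mult) (simp add: algebra_simps)
    also have "\<dots> = (-1) ^ Suc m * complete_homogeneous (\<lambda>k. v (Suc k)) (Suc m) d
        + (- v (Suc (Suc d))) * ((-1) ^ m * complete_homogeneous (\<lambda>k. v (Suc k)) m (Suc d))"
    proof -
      have "a * \<phi> (v (Suc d)) = - v (Suc (Suc d))" using "3.prems"[of "Suc d"] by simp
      then show ?thesis by (simp only: "3.IH"[OF "3.prems"])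
    qed
    also have "\<dots> = (-1) ^ Suc m * complete_homogeneous (\<lambda>k. v (Suc k)) (Suc m) (Suc d)"
      by (simp add: algebra_simps)
    finally show ?case .
  qed
qed

lemma sum_funpow_telescope:
  fixes N :: "'a::ab_group_add \<Rightarrow> 'a"
  assumes "\<And>a b. N (a - b) = N a - N b"
  shows "(\<Sum>k<j. (N ^^ k) (f - N f)) = f - (N ^^ j) f"
proof -
  have "(N ^^ k) (a - b) = (N ^^ k) a - (N ^^ k) b" for k a b
    by (induction k) (simp_all add: assms)
  then have "(\<Sum>k<j. (N ^^ k) (f - N f)) = (\<Sum>k<j. (N ^^ k) f - (N ^^ Suc k) f)"
    by (simp add: funpow_swap1)
  also have "\<dots> = f - (N ^^ j) f"
    using sum_lessThan_telescope'[of "\<lambda>k. (N ^^ k) f" j] by simp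
  finally show ?thesis .
qed

lemma fls_nth_sigma_q: "sigma_q q f $$ k = q powi k * f $$ k"
proof -
  obtain N where "\<forall>n<N. f $$ n = 0" by (elim fls_nth_vanishes_belowE)
  then have "\<forall>n<N. q powi n * f $$ n = 0" by auto
  then show ?thesis unfolding sigma_q_def by (rule nth_Abs_fls_lower_bound)
qed

lemma sigma_q_add: "sigma_q q (a + b) = sigma_q q a + sigma_q q b"
  by (rule fls_eqI) (simp add: fls_nth_sigma_q algebra_simps)

lemma sigma_q_diff: "sigma_q q (a - b) = sigma_q q a - sigma_q q b"
  by (rule fls_eqI) (simp add: fls_nth_sigma_q algebra_simps)

lemma sigma_q_uminus: "sigma_q q (- a) = - sigma_q q a"
  by (rule fls_eqI) (simp add: fls_nth_sigma_q)

lemma sigma_q_one: "sigma_q q 1 = 1"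
  by (rule fls_eqI) (simp add: fls_nth_sigma_q)

lemma fls_subdegree_sigma_q:
  assumes "q \<noteq> 0" shows "fls_subdegree (sigma_q q f) = fls_subdegree f"
proof (cases "f = 0")
  case True
  moreover have "sigma_q q 0 = 0" by (rule fls_eqI) (simp add: fls_nth_sigma_q)
  ultimately show ?thesis by simp
next
  case False
  then show ?thesis
    by (intro fls_subdegree_eqI) (simp_all add: fls_nth_sigma_q assms)
qed

lemma sigma_q_mult:
  assumes q: "q \<noteq> 0" shows "sigma_q q (a * b) = sigma_q q a * sigma_q q b"
proof (rule fls_eqI)
  fix n
  have "(sigma_q q a * sigma_q q b) $$ n
     = (\<Sum>i = fls_subdegree a..n - fls_subdegree b. q powi i * a $$ i * (q powi (n - i) * b $$ (n - i)))"
    using fls_times_nth(2)[of "sigma_q q a" "sigma_q q b" n]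
    by (simp add: fls_subdegree_sigma_q q fls_nth_sigma_q)
  also have "\<dots> = (\<Sum>i = fls_subdegree a..n - fls_subdegree b. q powi n * (a $$ i * b $$ (n - i)))"
  proof (rule sum.cong)
    fix i
    have "q powi i * q powi (n - i) = q powi n"
      using q by (simp add: power_int_add[symmetric])
    then show "q powi i * a $$ i * (q powi (n - i) * b $$ (n - i)) = q powi n * (a $$ i * b $$ (n - i))"
      by (metis mult.assoc mult.left_commute)
  qed simp
  also have "\<dots> = sigma_q q (a * b) $$ n"
    by (simp only: fls_nth_sigma_q fls_times_nth(2)[of a b n] sum_distrib_left)
  finally show "sigma_q q (a * b) $$ n = (sigma_q q a * sigma_q q b) $$ n" ..
qed

lemma beta_seq_telescope:
  assumes "\<alpha> * sigma_q q f + f = \<beta>"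
  shows "beta_seq q \<alpha> \<beta> j = f - ((\<lambda>h. - (\<alpha> * sigma_q q h)) ^^ j) f"
proof -
  let ?N = "\<lambda>h. - (\<alpha> * sigma_q q h)"
  have \<beta>: "\<beta> = f - ?N f" using assms by (simp add: add.commute)
  have "beta_seq q \<alpha> \<beta> j = (\<Sum>k<j. (?N ^^ k) (f - ?N f))"
    by (simp only: beta_seq_def \<beta>)
  also have "\<dots> = f - (?N ^^ j) f"
    by (rule sum_funpow_telescope) (simp add: sigma_q_diff algebra_simps)
  finally show ?thesis .
qed

lemma L_factor_complete_homogeneous:
  assumes q: "q \<noteq> 0"
    and shift: "\<And>j. v (Suc j) = - (\<alpha> * sigma_q q (v j))"
    and beta: "beta_seq q \<alpha> \<beta> (Suc d) = v 0 - v (Suc d)"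
    and nonzero: "beta_seq q \<alpha> \<beta> (Suc d) \<noteq> 0"
  shows "L_factor q \<alpha> \<beta> (Suc m + d) (Suc m) ((-1) ^ e * complete_homogeneous v (Suc m) d)
       = (-1) ^ (e + m) * complete_homogeneous v m (Suc d)"
proof -
  let ?h = "complete_homogeneous v (Suc m) d"
  let ?h' = "complete_homogeneous (\<lambda>k. v (Suc k)) (Suc m) d"
  let ?g = "complete_homogeneous v m (Suc d)"
  have hom: "\<alpha> ^ Suc m * sigma_q q ?h = (-1) ^ Suc m * ?h'"
    by (rule complete_homogeneous_endomorphism) (simp_all add: sigma_q_add sigma_q_mult q sigma_q_one shift)
  have sign: "sigma_q q ((-1) ^ e * g) = (-1) ^ e * sigma_q q g" for g
    by (induction e) (simp_all add: sigma_q_mult[OF q] sigma_q_uminus sigma_q_one)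
  have "\<alpha> ^ Suc m * sigma_q q ((-1) ^ e * ?h) - (-1) ^ Suc m * ((-1) ^ e * ?h)
      = (-1) ^ e * (-1) ^ Suc m * (?h' - ?h)"
  proof -
    have "\<alpha> ^ Suc m * sigma_q q ((-1) ^ e * ?h) = (-1) ^ e * ((-1) ^ Suc m * ?h')"
      unfolding sign hom[symmetric] by (rule mult.left_commute)
    then show ?thesis by (simp add: algebra_simps)
  qed
  also have "\<dots> = (-1) ^ (e + m) * ?g * (v 0 - v (Suc d))"
    unfolding complete_homogeneous_shift_diff by (simp add: power_add algebra_simps)
  finally show ?thesis
    using nonzero unfolding L_factor_def by (simp add: beta)
qed

lemma foldr_L_factor_power:
  assumes q: "q \<noteq> 0"
    and shift: "\<And>j. v (Suc j) = - (\<alpha> * sigma_q q (v j))"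
    and beta: "\<And>j. beta_seq q \<alpha> \<beta> j = v 0 - v j"
    and nonzero: "\<forall>j. 0 < j \<and> j \<le> n \<longrightarrow> beta_seq q \<alpha> \<beta> j \<noteq> 0"
    and "k \<le> n"
  shows "foldr (L_factor q \<alpha> \<beta> n) [Suc k..<Suc n] (v 0 ^ n)
       = (-1) ^ \<Sum>{k..<n} * complete_homogeneous v k (n - k)"
  using \<open>k \<le> n\<close>
proof (induction k rule: inc_induct)
  case base
  show ?case by (cases n) simp_all
next
  case (step k)
  define d where "d = n - Suc k"
  have n: "n = Suc k + d" using step.hyps by (simp add: d_def)
  have upt: "[Suc k..<Suc n] = Suc k # [Suc (Suc k)..<Suc n]"
    using step.hyps by (simp add: upt_conv_Cons)
  have "beta_seq q \<alpha> \<beta> (Suc d) \<noteq> 0"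
    using nonzero n by auto
  note factor = L_factor_complete_homogeneous[OF q shift beta this, of k]
  have "foldr (L_factor q \<alpha> \<beta> n) [Suc k..<Suc n] (v 0 ^ n)
      = L_factor q \<alpha> \<beta> n (Suc k) ((-1) ^ \<Sum>{Suc k..<n} * complete_homogeneous v (Suc k) d)"
    unfolding upt foldr_Cons o_apply step.IH d_def ..
  also have "\<dots> = (-1) ^ (\<Sum>{Suc k..<n} + k) * complete_homogeneous v k (Suc d)"
    using factor by (simp only: n)
  also have "\<Sum>{Suc k..<n} + k = \<Sum>{k..<n}"
    using step.hyps by (simp add: sum.atLeast_Suc_lessThan)
  finally show ?case by (simp add: n)
qed

theorem theorem2:
  fixes q :: complex and n :: nat and \<alpha> \<beta> f :: "complex fls"
  assumes "q \<noteq> 0" and "n > 0"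
    and "\<alpha> \<noteq> 0" and "\<beta> \<noteq> 0"
    and "\<alpha> * sigma_q q f + f = \<beta>"
    and "\<forall>j. 0 < j \<and> j \<le> n \<longrightarrow> beta_seq q \<alpha> \<beta> j \<noteq> 0"
  shows "L_op q \<alpha> \<beta> n (f ^ n) = (-1) ^ (n * (n - 1) div 2)"
proof -
  define v where "v j = ((\<lambda>h. - (\<alpha> * sigma_q q h)) ^^ j) f" for j
  have shift: "v (Suc j) = - (\<alpha> * sigma_q q (v j))" for j
    by (simp add: v_def)
  have beta: "beta_seq q \<alpha> \<beta> j = v 0 - v j" for j
    using beta_seq_telescope[OF assms(5)] by (simp add: v_def)
  have "L_op q \<alpha> \<beta> n (f ^ n) = foldr (L_factor q \<alpha> \<beta> n) [Suc 0..<Suc n] (v 0 ^ n)"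
    by (simp add: L_op_def v_def)
  also have "\<dots> = (-1) ^ \<Sum>{0..<n}"
    using foldr_L_factor_power[OF assms(1) shift beta assms(6)] by simp
  finally show ?thesis by (simp add: Sum_Ico_nat)
qed

end
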